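(* Let $\Sigma$ be a finite alphabet. For every unranked ordered $\Sigma$-labeled tree $t$ with $|t|\ge 2$, we have $|\mathrm{dag}(t)| \le \frac12 |\mathrm{hdag}(t)|^2$.
   Context: An unranked tree over $\Sigma$ is a finite rooted tree with nodes labeled in $\Sigma$ and linearly ordered children (arbitrary finite number); $|t|$ is its number of edges. $\mathrm{dag}(t)$ is the minimal dag of $t$: its nodes are the distinct subtrees of $t$, and the node of a subtree $f(s_1,\dots,s_k)$ has $k$ ordered edges to the nodes of $s_1,\dots,s_k$; $|\mathrm{dag}(t)|$ is its number of edges. The first-child/next-sibling encoding $\mathrm{fcns}$ maps a sequence of unranked trees to a binary tree (optional left and right child at each node): $\mathrm{fcns}(\varepsilon)$ is empty and $\mathrm{fcns}(t_1\cdots t_n)=f(\mathrm{fcns}(u_1\cdots u_m),\mathrm{fcns}(t_2\cdots t_n))$ when $t_1=f(u_1,\dots,u_m)$. Hybrid dag: for each distinct subtree $s=f(s_1,\dots,s_k)$ of $t$ with $k\ge1$ introduce a fresh symbol $A_s$ and the height-one tree $\rho_s=f(\alpha_1,\dots,\alpha_k)$, where $\alpha_i$ is the label of $s_i$ if $s_i$ is a single node and $\alpha_i=A_{s_i}$ otherwise. Let $\rho'_s$ be $\rho_s$ with its root additionally marked by $A_s$. $\mathrm{hdag}(t)$ is the minimal dag of the forest of binary trees $\mathrm{fcns}(\rho'_s)$ (identical subtrees anywhere in the forest merged), and $|\mathrm{hdag}(t)|$ is its number of edges, not counting edges to absent children. *)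

theory Defs
  imports Main "HOL.Real"
begin

datatype 'a utree = Node 'a "'a utree list"

fun root :: "'a utree \<Rightarrow> 'a" where
  "root (Node a ts) = a"

fun children :: "'a utree \<Rightarrow> 'a utree list" where
  "children (Node a ts) = ts"

fun nnodes :: "'a utree \<Rightarrow> nat" where
  "nnodes (Node a ts) = 1 + sum_list (map nnodes ts)"

definition tsize :: "'a utree \<Rightarrow> nat" where
  "tsize t = nnodes t - 1"

fun subtrees :: "'a utree \<Rightarrow> 'a utree set" where
  "subtrees (Node a ts) = insert (Node a ts) (\<Union> (set (map subtrees ts)))"

text \<open>Number of edges of the minimal dag: each distinct subtree f(s1..sk) contributes k edges.\<close>
definition dag_size :: "'a utree \<Rightarrow> nat" where
  "dag_size t = (\<Sum>s\<in>subtrees t. length (children s))"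

datatype 'b btree = BEmpty | BNode 'b "'b btree" "'b btree"

fun fcns :: "'b utree list \<Rightarrow> 'b btree" where
  "fcns [] = BEmpty"
| "fcns (Node f us # ts) = BNode f (fcns us) (fcns ts)"

fun bsubtrees :: "'b btree \<Rightarrow> 'b btree set" where
  "bsubtrees BEmpty = {}"
| "bsubtrees (BNode x l r) = insert (BNode x l r) (bsubtrees l \<union> bsubtrees r)"

fun bout :: "'b btree \<Rightarrow> nat" where
  "bout BEmpty = 0"
| "bout (BNode x l r) = (if l = BEmpty then 0 else 1) + (if r = BEmpty then 0 else 1)"

definition forest_dag_size :: "'b btree set \<Rightarrow> nat" where
  "forest_dag_size F = (\<Sum>s\<in>\<Union> (bsubtrees ` F). bout s)"

text \<open>Labels of the hybrid trees: original symbols, fresh nonterminals A_s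
  (represented by the subtree s itself), and a root symbol f marked by A_s.\<close>
datatype 'a hlab = Sym 'a | Nt "'a utree" | Marked 'a "'a utree"

definition alpha :: "'a utree \<Rightarrow> 'a hlab" where
  "alpha s = (if children s = [] then Sym (root s) else Nt s)"

definition rho' :: "'a utree \<Rightarrow> 'a hlab utree" where
  "rho' s = Node (Marked (root s) s) (map (\<lambda>si. Node (alpha si) []) (children s))"

definition hdag_size :: "'a utree \<Rightarrow> nat" where
  "hdag_size t = forest_dag_size {fcns [rho' s] | s. s \<in> subtrees t \<and> children s \<noteq> []}"

end

theory Submission
  imports Defs
begin

text \<open>Let n be the number of distinct internal subtrees of t and h = |hdag(t)|. For every
  internal subtree s with k children, the hybrid dag contains the n roots of the trees
  fcns(rho'_s), each with an edge to its left child, and the k - 1 nodes of the right spine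
  of fcns(rho'_s) that have a right child; hence n + k - 1 \<le> h. Summing k \<le> h + 1 - n
  over the internal subtrees gives |dag(t)| \<le> n (h + 1 - n) \<le> h^2 / 2, the last step
  failing only for n = h = 1, which |t| \<ge> 2 excludes.\<close>

definition internal_subtrees :: "'a utree \<Rightarrow> 'a utree set" where
  "internal_subtrees t = {s \<in> subtrees t. children s \<noteq> []}"

lemma finite_subtrees: "finite (subtrees t)"
  by (induction t) auto

lemma finite_internal_subtrees: "finite (internal_subtrees t)"
  by (simp add: internal_subtrees_def finite_subtrees)

lemma self_in_subtrees: "t \<in> subtrees t"
  by (cases t) simp

lemma dag_size_eq_sum_internal_subtrees:
  "dag_size t = (\<Sum>s\<in>internal_subtrees t. length (children s))"
  unfolding dag_size_def internal_subtrees_def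
  by (rule sum.mono_neutral_right) (auto simp: finite_subtrees)

lemma hdag_size_eq_forest_dag_size_image:
  "hdag_size t = forest_dag_size ((\<lambda>s. fcns [rho' s]) ` internal_subtrees t)"
proof -
  have "{fcns [rho' s] |s. s \<in> subtrees t \<and> children s \<noteq> []}
        = (\<lambda>s. fcns [rho' s]) ` internal_subtrees t"
    unfolding internal_subtrees_def by blast
  then show ?thesis unfolding hdag_size_def by simp
qed

lemma finite_bsubtrees: "finite (bsubtrees b)"
  by (induction b) auto

lemma card_le_forest_dag_size:
  assumes "finite F" and "A \<subseteq> \<Union> (bsubtrees ` F)" and "\<And>x. x \<in> A \<Longrightarrow> bout x \<noteq> 0"
  shows "card A \<le> forest_dag_size F"
proof -
  have "card A = (\<Sum>x\<in>A. 1)" by simp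
  also have "\<dots> \<le> (\<Sum>x\<in>A. bout x)"
    by (rule sum_mono) (use assms(3) in fastforce)
  also have "\<dots> \<le> (\<Sum>x\<in>\<Union> (bsubtrees ` F). bout x)"
    by (rule sum_mono2) (use assms(1,2) finite_bsubtrees in auto)
  finally show ?thesis unfolding forest_dag_size_def .
qed

lemma Node_root_children: "Node (root t) (children t) = t"
  by (cases t) simp

lemma fcns_Cons: "fcns (x # ts) = BNode (root x) (fcns (children x)) (fcns ts)"
  by (cases x) simp

lemma fcns_eq_BEmpty_iff: "fcns ts = BEmpty \<longleftrightarrow> ts = []"
  by (cases ts) (simp_all add: fcns_Cons)

lemma inj_fcns: "inj fcns"
proof (rule injI)
  show "fcns xs = fcns ys \<Longrightarrow> xs = ys" for xs ys :: "'b utree list"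
  proof (induction xs arbitrary: ys rule: fcns.induct)
    case 1
    then show ?case by (metis fcns_eq_BEmpty_iff)
  next
    case (2 f us ts)
    then show ?case
      by (cases ys) (auto simp: fcns_Cons Node_root_children)
  qed
qed

lemma fcns_drop_in_bsubtrees: "i < length ts \<Longrightarrow> fcns (drop i ts) \<in> bsubtrees (fcns ts)"
proof (induction ts arbitrary: i)
  case (Cons x ts)
  then show ?case by (cases i) (auto simp: fcns_Cons)
qed simp

lemma fcns_drop_eq_BNode:
  "i < length ts \<Longrightarrow>
   fcns (drop i ts) = BNode (root (ts ! i)) (fcns (children (ts ! i))) (fcns (drop (Suc i) ts))"
  using Cons_nth_drop_Suc[of i ts] by (metis fcns_Cons)

lemma fcns_rho': "fcns [rho' s] =
  BNode (Marked (root s) s) (fcns (map (\<lambda>si. Node (alpha si) []) (children s))) BEmpty"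
  by (simp add: rho'_def)

lemma card_internal_subtrees_add_length_children_le_hdag_size:
  assumes s: "s \<in> internal_subtrees t"
  shows "card (internal_subtrees t) + length (children s) \<le> hdag_size t + 1"
proof -
  define roots where "roots = (\<lambda>s. fcns [rho' s]) ` internal_subtrees t"
  define L where "L = map (\<lambda>si. Node (alpha si) []) (children s)"
  define spine where "spine = (\<lambda>i. fcns (drop i L)) ` {..<length L - 1}"
  have "children s \<noteq> []" using s by (simp add: internal_subtrees_def)
  then have length_L: "length L = length (children s)" "L \<noteq> []" by (simp_all add: L_def)
  have card_roots: "card roots = card (internal_subtrees t)"
    unfolding roots_def by (rule card_image) (auto simp: inj_on_def fcns_rho')
  have "inj_on (\<lambda>i. fcns (drop i L)) {..<length L - 1}"
  proof (rule inj_onI)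
    fix i j assume "i \<in> {..<length L - 1}" "j \<in> {..<length L - 1}" "fcns (drop i L) = fcns (drop j L)"
    then have "length (drop i L) = length (drop j L)" "i < length L" "j < length L"
      using injD[OF inj_fcns] by (metis, auto)
    then show "i = j" by simp
  qed
  then have card_spine: "card spine = length L - 1"
    unfolding spine_def by (simp add: card_image)
  have spine_right: "x \<in> spine \<Longrightarrow> \<exists>a l r. x = BNode a l r \<and> r \<noteq> BEmpty" for x
    unfolding spine_def by (auto simp: fcns_drop_eq_BNode fcns_eq_BEmpty_iff)
  have "roots \<inter> spine = {}"
    using spine_right unfolding roots_def by (fastforce simp: fcns_rho')
  then have "card (roots \<union> spine) = card (internal_subtrees t) + (length L - 1)"
    using card_roots card_spine card_Un_disjoint[of roots spine]
    by (simp add: roots_def spine_def finite_internal_subtrees)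
  moreover have "card (roots \<union> spine) \<le> forest_dag_size roots"
  proof (rule card_le_forest_dag_size)
    show "finite roots" by (simp add: roots_def finite_internal_subtrees)
    have "spine \<subseteq> bsubtrees (fcns [rho' s])"
      unfolding spine_def using fcns_drop_in_bsubtrees[of _ L] by (auto simp: fcns_rho' L_def)
    then show "roots \<union> spine \<subseteq> \<Union> (bsubtrees ` roots)"
      using s unfolding roots_def by (auto simp: fcns_rho')
    show "bout x \<noteq> 0" if "x \<in> roots \<union> spine" for x
      using that spine_right[of x] unfolding roots_def internal_subtrees_def
      by (auto simp: fcns_rho' fcns_eq_BEmpty_iff)
  qed
  ultimately show ?thesis
    using length_L by (simp add: roots_def hdag_size_eq_forest_dag_size_image)
qed

lemma dag_size_le_card_internal_subtrees_mult:
  "dag_size t \<le> card (internal_subtrees t) * (hdag_size t + 1 - card (internal_subtrees t))"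
proof -
  have "length (children s) \<le> hdag_size t + 1 - card (internal_subtrees t)"
    if "s \<in> internal_subtrees t" for s
    using card_internal_subtrees_add_length_children_le_hdag_size[OF that] by linarith
  then have "(\<Sum>s\<in>internal_subtrees t. length (children s))
      \<le> (\<Sum>s\<in>internal_subtrees t. hdag_size t + 1 - card (internal_subtrees t))"
    by (rule sum_mono)
  then show ?thesis by (simp add: dag_size_eq_sum_internal_subtrees)
qed

lemma two_mult_le_square:
  fixes n h :: nat
  assumes "\<not> (n = 1 \<and> h = 1)"
  shows "2 * (n * (h + 1 - n)) \<le> h ^ 2"
proof (cases "n \<le> h + 1")
  case True
  then obtain m where h: "h + 1 = n + m" using le_Suc_ex by blast
  consider "n = 0" | "n = 1" | "n \<ge> 2" by linarith
  then show ?thesis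
  proof cases
    case 2
    with assms have "h = 0 \<or> 2 \<le> h" by linarith
    then show ?thesis using 2 by (auto simp: power2_eq_square)
  next
    case 3
    then obtain k where n: "n = k + 2" and h: "h = (k + 1) + m"
      using h le_Suc_ex[of 2 n] by auto
    have "2 * m \<le> 1 + m ^ 2" by (cases m) (auto simp: power2_eq_square)
    moreover have "1 \<le> (k + 1) ^ 2" by simp
    moreover have "h ^ 2 = (k + 1) ^ 2 + m ^ 2 + 2 * (k + 1) * m" unfolding h by (rule power2_sum)
    moreover have "2 * (n * m) = 2 * (k + 1) * m + 2 * m" unfolding n by (simp add: algebra_simps)
    moreover have "h + 1 - n = m" using \<open>h + 1 = n + m\<close> by simp
    ultimately show ?thesis by (simp only: \<open>h + 1 - n = m\<close>)
  qed simp
qed simp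

lemma two_le_card_internal_subtrees_or_length_children:
  assumes "tsize t \<ge> 2"
  shows "2 \<le> card (internal_subtrees t) \<or> 2 \<le> length (children t)"
proof -
  obtain a ts where t: "t = Node a ts" by (cases t)
  consider "ts = []" | c where "ts = [c]" | "2 \<le> length ts"
    by (cases ts rule: remdups_adj.cases) auto
  then show ?thesis
  proof cases
    case 1
    with assms show ?thesis by (simp add: t tsize_def)
  next
    case (2 c)
    then have "nnodes t = 1 + nnodes c" by (simp add: t)
    then have "t \<noteq> c" by auto
    have "children c \<noteq> []"
      using assms \<open>ts = [c]\<close> by (cases c) (auto simp: t tsize_def)
    then have "{t, c} \<subseteq> internal_subtrees t"
      using \<open>ts = [c]\<close> self_in_subtrees[of c] by (auto simp: t internal_subtrees_def)
    then have "card {t, c} \<le> card (internal_subtrees t)"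
      by (intro card_mono finite_internal_subtrees)
    then show ?thesis using \<open>t \<noteq> c\<close> by simp
  qed (simp add: t)
qed

theorem theorem2:
  fixes t :: "('a :: finite) utree"
  assumes "tsize t \<ge> 2"
  shows "real (dag_size t) \<le> (1/2) * (real (hdag_size t))^2"
proof -
  let ?n = "card (internal_subtrees t)" and ?h = "hdag_size t"
  have "\<not> (?n = 1 \<and> ?h = 1)"
  proof
    assume degenerate: "?n = 1 \<and> ?h = 1"
    then have "2 \<le> length (children t)"
      using two_le_card_internal_subtrees_or_length_children[OF assms] by linarith
    then have "t \<in> internal_subtrees t"
      using self_in_subtrees[of t] by (auto simp: internal_subtrees_def)
    from card_internal_subtrees_add_length_children_le_hdag_size[OF this]
    show False using degenerate \<open>2 \<le> length (children t)\<close> by linarith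
  qed
  then have "2 * (?n * (?h + 1 - ?n)) \<le> ?h ^ 2"
    by (rule two_mult_le_square)
  then have "2 * dag_size t \<le> ?h ^ 2"
    using dag_size_le_card_internal_subtrees_mult[of t] by linarith
  then have "real (2 * dag_size t) \<le> real (?h ^ 2)"
    by (rule of_nat_mono)
  then show ?thesis by simp
qed

end
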